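(* Let $\alpha:\mathbf A\to\mathbf B$ be a surjective homomorphism of $\tau$-algebras, and write $\alpha^\omega:A^\omega\to B^\omega$ for its coordinatewise extension. Then: (1) for every function $\varphi:A^\omega\to A$ there is at most one $\psi:B^\omega\to B$ with $\psi\circ\alpha^\omega=\alpha\circ\varphi$; when it exists, denote it $\alpha^\star(\varphi)$; (2) the set $C$ of all $\varphi:A^\omega\to A$ for which $\alpha^\star(\varphi)$ exists is the universe of a subalgebra $\mathcal C$ of $\mathcal O^{(\omega)}_{\mathbf A}$; (3) $\alpha^\star:\mathcal C\to\mathcal O^{(\omega)}_{\mathbf B}$ is a surjective homomorphism of infinitary clone $\tau$-algebras.
   Context: $\tau$ is a set of $\omega$-ary operation symbols; a $\tau$-algebra has operations $f^{\mathbf A}:A^\omega\to A$. For a $\tau$-algebra $\mathbf A$, $\mathcal O^{(\omega)}_{\mathbf A}$ is the algebra whose universe is all functions $A^\omega\to A$, with constants $e_i(s)=s_i$ ($i\in\omega$), a constant $f^{\mathbf A}$ for each $f\in\tau$, and the $\omega$-ary operation $q(g_0,g_1,\dots)(s)=g_0(g_1(s),g_2(s),\dots)$; this is an infinitary clone $\tau$-algebra (an algebra with constants $e_i$, $f$ and $\omega$-ary $q$ satisfying $q(e_i,x_0,x_1,\dots)=x_i$, $q(x,e_0,e_1,\dots)=x$, and $q(q(x,\boldsymbol y),\boldsymbol z)=q(x,q(y_0,\boldsymbol z),q(y_1,\boldsymbol z),\dots)$). *)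

theory Defs
  imports Main
begin

text \<open>A tau-algebra with universe the type 'a and omega-ary operations indexed by 'f
  (the symbol set tau is the type 'f):  ops f : A^omega -> A.\<close>

definition tau_hom :: "('f \<Rightarrow> (nat \<Rightarrow> 'a) \<Rightarrow> 'a) \<Rightarrow> ('f \<Rightarrow> (nat \<Rightarrow> 'b) \<Rightarrow> 'b) \<Rightarrow> ('a \<Rightarrow> 'b) \<Rightarrow> bool" where
  "tau_hom opsA opsB \<alpha> \<longleftrightarrow> (\<forall>f s. \<alpha> (opsA f s) = opsB f (\<lambda>i. \<alpha> (s i)))"

definition omega_ext :: "('a \<Rightarrow> 'b) \<Rightarrow> (nat \<Rightarrow> 'a) \<Rightarrow> (nat \<Rightarrow> 'b)" where
  "omega_ext \<alpha> s = (\<lambda>i. \<alpha> (s i))"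

record ('c, 'f) clone_alg =
  cuniv :: "'c set"
  ce :: "nat \<Rightarrow> 'c"
  cf :: "'f \<Rightarrow> 'c"
  cq :: "(nat \<Rightarrow> 'c) \<Rightarrow> 'c"

definition qcomp :: "(nat \<Rightarrow> ((nat \<Rightarrow> 'a) \<Rightarrow> 'a)) \<Rightarrow> (nat \<Rightarrow> 'a) \<Rightarrow> 'a" where
  "qcomp g s = g 0 (\<lambda>i. g (Suc i) s)"

definition O_alg :: "('f \<Rightarrow> (nat \<Rightarrow> 'a) \<Rightarrow> 'a) \<Rightarrow> (((nat \<Rightarrow> 'a) \<Rightarrow> 'a), 'f) clone_alg" where
  "O_alg opsA = \<lparr> cuniv = UNIV, ce = (\<lambda>i s. s i), cf = opsA, cq = qcomp \<rparr>"

definition clone_subuniverse :: "'c set \<Rightarrow> ('c, 'f) clone_alg \<Rightarrow> bool" where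
  "clone_subuniverse C K \<longleftrightarrow> C \<subseteq> cuniv K \<and> (\<forall>i. ce K i \<in> C) \<and> (\<forall>f. cf K f \<in> C)
     \<and> (\<forall>g. (\<forall>i. g i \<in> C) \<longrightarrow> cq K g \<in> C)"

definition subalg :: "('c, 'f) clone_alg \<Rightarrow> 'c set \<Rightarrow> ('c, 'f) clone_alg" where
  "subalg K C = K\<lparr> cuniv := C \<rparr>"

definition clone_hom :: "('c, 'f) clone_alg \<Rightarrow> ('d, 'f) clone_alg \<Rightarrow> ('c \<Rightarrow> 'd) \<Rightarrow> bool" where
  "clone_hom K L h \<longleftrightarrow> (\<forall>x\<in>cuniv K. h x \<in> cuniv L)
     \<and> (\<forall>i. h (ce K i) = ce L i) \<and> (\<forall>f. h (cf K f) = cf L f)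
     \<and> (\<forall>g. (\<forall>i. g i \<in> cuniv K) \<longrightarrow> h (cq K g) = cq L (\<lambda>i. h (g i)))"

definition is_lift :: "('a \<Rightarrow> 'b) \<Rightarrow> ((nat \<Rightarrow> 'a) \<Rightarrow> 'a) \<Rightarrow> ((nat \<Rightarrow> 'b) \<Rightarrow> 'b) \<Rightarrow> bool" where
  "is_lift \<alpha> \<phi> \<psi> \<longleftrightarrow> \<psi> \<circ> omega_ext \<alpha> = \<alpha> \<circ> \<phi>"

definition alpha_star :: "('a \<Rightarrow> 'b) \<Rightarrow> ((nat \<Rightarrow> 'a) \<Rightarrow> 'a) \<Rightarrow> ((nat \<Rightarrow> 'b) \<Rightarrow> 'b)" where
  "alpha_star \<alpha> \<phi> = (THE \<psi>. is_lift \<alpha> \<phi> \<psi>)"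

definition star_domain :: "('a \<Rightarrow> 'b) \<Rightarrow> ((nat \<Rightarrow> 'a) \<Rightarrow> 'a) set" where
  "star_domain \<alpha> = {\<phi>. \<exists>\<psi>. is_lift \<alpha> \<phi> \<psi>}"

end

theory Submission
  imports Defs
begin

text \<open>Since \<open>\<alpha>\<close>, hence \<open>\<alpha>\<^sup>\<omega>\<close>, is onto, the equation \<open>\<psi> \<circ> \<alpha>\<^sup>\<omega> = \<alpha> \<circ> \<phi>\<close> fixes \<open>\<psi>\<close>
  everywhere, and every \<open>\<psi>\<close> is the lift of \<open>inv \<alpha> \<circ> \<psi> \<circ> \<alpha>\<^sup>\<omega>\<close>.  Projections lift to
  projections, each basic operation of A to the corresponding one of B (this is the homomorphism
  property of \<open>\<alpha>\<close>), and lifts of \<open>g\<^sub>0, g\<^sub>1, \<dots>\<close> compose to a lift of \<open>q(g\<^sub>0, g\<^sub>1, \<dots>)\<close>.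
  These three facts give at once closure of the liftable functions under the clone operations
  and the homomorphism property of \<open>\<alpha>\<^sup>\<star>\<close>.\<close>

lemma is_lift_iff: "is_lift \<alpha> \<phi> \<psi> \<longleftrightarrow> (\<forall>s. \<psi> (omega_ext \<alpha> s) = \<alpha> (\<phi> s))"
  unfolding is_lift_def by (simp add: fun_eq_iff)

lemma surj_omega_ext:
  fixes \<alpha> :: "'a \<Rightarrow> 'b"
  assumes "surj \<alpha>"
  shows "surj (omega_ext \<alpha>)"
proof (rule surjI)
  fix t :: "nat \<Rightarrow> 'b"
  show "omega_ext \<alpha> (\<lambda>i. inv \<alpha> (t i)) = t"
    using assms by (simp add: omega_ext_def surj_f_inv_f)
qed

lemma is_lift_unique:
  assumes "surj \<alpha>" and "is_lift \<alpha> \<phi> \<psi>\<^sub>1" and "is_lift \<alpha> \<phi> \<psi>\<^sub>2"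
  shows "\<psi>\<^sub>1 = \<psi>\<^sub>2"
proof
  fix t
  obtain s where "t = omega_ext \<alpha> s"
    using surj_omega_ext[OF assms(1)] by (metis surjD)
  then show "\<psi>\<^sub>1 t = \<psi>\<^sub>2 t"
    using assms(2,3) by (simp add: is_lift_iff)
qed

lemma alpha_star_eq:
  assumes "surj \<alpha>" and "is_lift \<alpha> \<phi> \<psi>"
  shows "alpha_star \<alpha> \<phi> = \<psi>"
  unfolding alpha_star_def using assms is_lift_unique by (metis the_equality)

lemma is_lift_proj: "is_lift \<alpha> (\<lambda>s. s i) (\<lambda>t. t i)"
  by (simp add: is_lift_iff omega_ext_def)

lemma is_lift_op: "tau_hom opsA opsB \<alpha> \<Longrightarrow> is_lift \<alpha> (opsA f) (opsB f)"
  by (simp add: is_lift_iff omega_ext_def tau_hom_def)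

lemma is_lift_qcomp:
  assumes "\<And>i. is_lift \<alpha> (g i) (h i)"
  shows "is_lift \<alpha> (qcomp g) (qcomp h)"
proof -
  have lift: "h i (\<lambda>j. \<alpha> (s j)) = \<alpha> (g i s)" for i s
    using assms by (simp add: is_lift_iff omega_ext_def)
  have "qcomp h (omega_ext \<alpha> s) = \<alpha> (qcomp g s)" for s
  proof -
    have "qcomp h (omega_ext \<alpha> s) = h 0 (\<lambda>i. \<alpha> (g (Suc i) s))"
      by (simp add: qcomp_def omega_ext_def lift)
    also have "\<dots> = \<alpha> (qcomp g s)"
      by (simp add: qcomp_def lift)
    finally show ?thesis .
  qed
  then show ?thesis by (simp add: is_lift_iff)
qed

lemma is_lift_inv: "surj \<alpha> \<Longrightarrow> is_lift \<alpha> (\<lambda>s. inv \<alpha> (\<psi> (omega_ext \<alpha> s))) \<psi>"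
  by (simp add: is_lift_iff surj_f_inv_f)

lemma star_domain_clone_subuniverse:
  assumes "tau_hom opsA opsB \<alpha>"
  shows "clone_subuniverse (star_domain \<alpha>) (O_alg opsA)"
proof -
  have proj: "(\<lambda>s. s i) \<in> star_domain \<alpha>" for i
    unfolding star_domain_def using is_lift_proj by blast
  have op: "opsA f \<in> star_domain \<alpha>" for f
    unfolding star_domain_def using is_lift_op[OF assms] by blast
  have comp: "qcomp g \<in> star_domain \<alpha>" if "\<forall>i. g i \<in> star_domain \<alpha>" for g
  proof -
    have "\<forall>i. \<exists>\<psi>. is_lift \<alpha> (g i) \<psi>"
      using that by (simp add: star_domain_def)
    then obtain h where "\<And>i. is_lift \<alpha> (g i) (h i)"
      by metis
    then show ?thesis
      unfolding star_domain_def using is_lift_qcomp by blast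
  qed
  show ?thesis
    unfolding clone_subuniverse_def O_alg_def by (simp add: proj op comp)
qed

lemma alpha_star_clone_hom:
  assumes "tau_hom opsA opsB \<alpha>" and "surj \<alpha>"
  shows "clone_hom (subalg (O_alg opsA) (star_domain \<alpha>)) (O_alg opsB) (alpha_star \<alpha>)"
proof -
  note star_eq = alpha_star_eq[OF assms(2)]
  have lift: "is_lift \<alpha> \<phi> (alpha_star \<alpha> \<phi>)" if "\<phi> \<in> star_domain \<alpha>" for \<phi>
    using that star_eq unfolding star_domain_def by fastforce
  have proj: "alpha_star \<alpha> (\<lambda>s. s i) = (\<lambda>t. t i)" for i
    using star_eq is_lift_proj .
  have op: "alpha_star \<alpha> (opsA f) = opsB f" for f
    using star_eq is_lift_op[OF assms(1)] .
  have comp: "alpha_star \<alpha> (qcomp g) = qcomp (\<lambda>i. alpha_star \<alpha> (g i))"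
    if "\<forall>i. g i \<in> star_domain \<alpha>" for g
    using that by (intro star_eq is_lift_qcomp lift) blast
  show ?thesis
    unfolding clone_hom_def subalg_def O_alg_def by (simp add: proj op comp)
qed

lemma alpha_star_image:
  assumes "surj \<alpha>"
  shows "alpha_star \<alpha> ` star_domain \<alpha> = UNIV"
proof -
  have "\<psi> \<in> alpha_star \<alpha> ` star_domain \<alpha>" for \<psi>
  proof
    let ?\<phi> = "\<lambda>s. inv \<alpha> (\<psi> (omega_ext \<alpha> s))"
    show "?\<phi> \<in> star_domain \<alpha>"
      unfolding star_domain_def using is_lift_inv[OF assms] by blast
    show "\<psi> = alpha_star \<alpha> ?\<phi>"
      using alpha_star_eq[OF assms is_lift_inv[OF assms]] by simp
  qed
  then show ?thesis by blast
qed

theorem lemma5p3: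
  fixes opsA :: "'f \<Rightarrow> (nat \<Rightarrow> 'a) \<Rightarrow> 'a"
    and opsB :: "'f \<Rightarrow> (nat \<Rightarrow> 'b) \<Rightarrow> 'b"
    and \<alpha> :: "'a \<Rightarrow> 'b"
  assumes hom: "tau_hom opsA opsB \<alpha>"
    and surj: "surj \<alpha>"
  shows "(\<forall>\<phi> \<psi>1 \<psi>2. is_lift \<alpha> \<phi> \<psi>1 \<longrightarrow> is_lift \<alpha> \<phi> \<psi>2 \<longrightarrow> \<psi>1 = \<psi>2)
    \<and> clone_subuniverse (star_domain \<alpha>) (O_alg opsA)
    \<and> clone_hom (subalg (O_alg opsA) (star_domain \<alpha>)) (O_alg opsB) (alpha_star \<alpha>)
    \<and> alpha_star \<alpha> ` star_domain \<alpha> = cuniv (O_alg opsB)"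
proof (intro conjI allI impI)
  show "\<psi>1 = \<psi>2" if "is_lift \<alpha> \<phi> \<psi>1" and "is_lift \<alpha> \<phi> \<psi>2" for \<phi> \<psi>1 \<psi>2
    using is_lift_unique[OF surj that] .
  show "clone_subuniverse (star_domain \<alpha>) (O_alg opsA)"
    using star_domain_clone_subuniverse[OF hom] .
  show "clone_hom (subalg (O_alg opsA) (star_domain \<alpha>)) (O_alg opsB) (alpha_star \<alpha>)"
    using alpha_star_clone_hom[OF hom surj] .
  show "alpha_star \<alpha> ` star_domain \<alpha> = cuniv (O_alg opsB)"
    using alpha_star_image[OF surj] by (simp add: O_alg_def)
qed

end
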